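(* Let $P$ be a poset and $\Delta^\varphi$ a nondegenerate simplex of $N(P)$. The space of filtered maps $\mathcal C^0_P(\|\Delta^\varphi\|_P,\|\Delta^\varphi\|_P)$ is contractible.
   Context: $\varphi_P:\|N(P)\|\to P$ sends a point $(\{q_0<\dots<q_m\},t)$, $t$ in the interior of $\Delta^m$, to $q_m$. For $\varphi:\Delta^n\hookrightarrow N(P)$, $\|\Delta^\varphi\|_P=(\|\Delta^n\|,\varphi_P\circ\|\varphi\|)$, a space over $P$ ($P$ with the Alexandrov topology). $\mathcal C^0_P(A,B)$ is the set of continuous maps $A\to B$ commuting with the maps to $P$, with the subspace topology of $\mathcal C^0(A,B)$ (in $\Delta$-generated spaces). *)

theory Defs
  imports "HOL-Analysis.Analysis"
begin

text \<open>Geometric standard n-simplex as a subset of nat \<Rightarrow> real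
  (same definition as in HOL-Homology.Simplices).\<close>
definition standard_simplex :: "nat \<Rightarrow> (nat \<Rightarrow> real) set" where
  "standard_simplex p \<equiv>
    {x. (\<forall>i. 0 \<le> x i \<and> x i \<le> 1) \<and> (\<forall>i>p. x i = 0) \<and> (\<Sum>i\<le>p. x i) = 1}"

abbreviation simplex_top :: "nat \<Rightarrow> (nat \<Rightarrow> real) topology" where
  "simplex_top k \<equiv> subtopology (powertop_real UNIV) (standard_simplex k)"

text \<open>Delta-ification: the final topology w.r.t. all continuous maps from standard simplices.\<close>
definition dgen_open :: "'a topology \<Rightarrow> 'a set \<Rightarrow> bool" where
  "dgen_open X U \<longleftrightarrow> U \<subseteq> topspace X \<and>
     (\<forall>k \<sigma>. continuous_map (simplex_top k) X \<sigma> \<longrightarrow>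
        openin (simplex_top k) {x \<in> standard_simplex k. \<sigma> x \<in> U})"

lemma istopology_dgen_open: "istopology (dgen_open X)"
  unfolding istopology_def
proof (intro conjI allI impI)
  fix S T assume S: "dgen_open X S" and T: "dgen_open X T"
  show "dgen_open X (S \<inter> T)"
    unfolding dgen_open_def
  proof (intro conjI allI impI)
    show "S \<inter> T \<subseteq> topspace X" using S unfolding dgen_open_def by blast
    fix k \<sigma> assume c: "continuous_map (simplex_top k) X \<sigma>"
    have eq: "{x \<in> standard_simplex k. \<sigma> x \<in> S \<inter> T} =
          {x \<in> standard_simplex k. \<sigma> x \<in> S} \<inter> {x \<in> standard_simplex k. \<sigma> x \<in> T}" by blast
    have oS: "openin (simplex_top k) {x \<in> standard_simplex k. \<sigma> x \<in> S}"
      using S c unfolding dgen_open_def by blast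
    have oT: "openin (simplex_top k) {x \<in> standard_simplex k. \<sigma> x \<in> T}"
      using T c unfolding dgen_open_def by blast
    show "openin (simplex_top k) {x \<in> standard_simplex k. \<sigma> x \<in> S \<inter> T}"
      unfolding eq using oS oT by (rule openin_Int)
  qed
next
  fix K assume K: "\<forall>S\<in>K. dgen_open X S"
  show "dgen_open X (\<Union>K)"
    unfolding dgen_open_def
  proof (intro conjI allI impI)
    show "\<Union>K \<subseteq> topspace X" using K unfolding dgen_open_def by blast
    fix k \<sigma> assume c: "continuous_map (simplex_top k) X \<sigma>"
    have eq: "{x \<in> standard_simplex k. \<sigma> x \<in> \<Union>K} =
          \<Union>((\<lambda>S. {x \<in> standard_simplex k. \<sigma> x \<in> S}) ` K)" by blast
    have o: "\<And>S. S \<in> K \<Longrightarrow> openin (simplex_top k) {x \<in> standard_simplex k. \<sigma> x \<in> S}"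
      using K c unfolding dgen_open_def by blast
    show "openin (simplex_top k) {x \<in> standard_simplex k. \<sigma> x \<in> \<Union>K}"
      unfolding eq by (rule openin_Union) (use o in blast)
  qed
qed

definition dgen :: "'a topology \<Rightarrow> 'a topology" where
  "dgen X = topology (dgen_open X)"

text \<open>Compact-open topology on the set of continuous maps A \<rightarrow> B
  (maps are taken extensional: undefined outside topspace A).\<close>
definition compact_open :: "'a topology \<Rightarrow> 'b topology \<Rightarrow> ('a \<Rightarrow> 'b) topology" where
  "compact_open A B = topology_generated_by
     {F. \<exists>K U. compactin A K \<and> openin B U \<and>
        F = {f. continuous_map A B f \<and> f \<in> extensional (topspace A) \<and> f ` K \<subseteq> U}}"

definition mapping_space :: "'a topology \<Rightarrow> 'b topology \<Rightarrow> ('a \<Rightarrow> 'b) topology" where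
  "mapping_space A B = dgen (compact_open A B)"

definition dsubtopology :: "'a topology \<Rightarrow> 'a set \<Rightarrow> 'a topology" where
  "dsubtopology X S = dgen (subtopology X S)"

definition dcontractible :: "'a topology \<Rightarrow> bool" where
  "dcontractible X \<longleftrightarrow> (\<exists>a \<in> topspace X. \<exists>H.
     continuous_map (dgen (prod_topology (top_of_set {0..1::real}) X)) X H \<and>
     (\<forall>x \<in> topspace X. H (0, x) = x \<and> H (1, x) = a))"

text \<open>A nondegenerate n-simplex of the nerve N(P): a chain q_0 < ... < q_n.\<close>
definition nondeg_simplex :: "nat \<Rightarrow> (nat \<Rightarrow> 'p::order) \<Rightarrow> bool" where
  "nondeg_simplex n \<phi> \<longleftrightarrow> strict_mono_on {..n} \<phi>"

text \<open>The structure map ||Delta^n|| \<rightarrow> P of ||Delta^phi||_P, i.e. phi_P o ||phi||: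
  a point in the interior of the face spanned by the vertex set S goes to phi(max S).\<close>
definition simplex_to_poset :: "(nat \<Rightarrow> 'p) \<Rightarrow> (nat \<Rightarrow> real) \<Rightarrow> 'p" where
  "simplex_to_poset \<phi> x = \<phi> (Max {i. x i \<noteq> 0})"

definition filtered_self_maps :: "nat \<Rightarrow> (nat \<Rightarrow> 'p) \<Rightarrow> ((nat \<Rightarrow> real) \<Rightarrow> (nat \<Rightarrow> real)) set" where
  "filtered_self_maps n \<phi> =
     {f. continuous_map (simplex_top n) (simplex_top n) f \<and> f \<in> extensional (standard_simplex n) \<and>
         (\<forall>x \<in> standard_simplex n. simplex_to_poset \<phi> (f x) = simplex_to_poset \<phi> x)}"

end

theory Submission
  imports "HOL-Homology.Simplices" Defs
begin

text \<open>The straight-line homotopy \<open>(t, f) \<mapsto> (1 - t) f + t id\<close> contracts the filtered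
  self-maps of \<open>|\<Delta>\<^sup>n|\<close> onto the identity. It stays filtered because a point lies over
  \<open>\<phi>\<close> of the largest index in its support, and a convex combination of two points with the
  same largest support index has that largest index again; \<open>\<phi>\<close> is injective on vertices,
  so filtered maps preserve this index. It is continuous because, by \<open>\<Delta>\<close>-generation, it
  suffices to test on maps from simplices, and there the exponential law for the compact
  Hausdorff space \<open>|\<Delta>\<^sup>n|\<close> reduces the claim to the continuity of a convex combination
  of continuous maps into \<open>|\<Delta>\<^sup>n|\<close>.\<close>

section \<open>\<Delta>-generated spaces\<close>

lemma openin_dgen: "openin (dgen X) U \<longleftrightarrow> dgen_open X U"
  unfolding dgen_def by (simp add: istopology_dgen_open)

lemma openin_imp_openin_dgen:
  assumes "openin X U"
  shows "openin (dgen X) U"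
  unfolding openin_dgen dgen_open_def
proof (intro conjI allI impI)
  show "U \<subseteq> topspace X"
    using assms by (rule openin_subset)
  fix k \<sigma>
  assume "continuous_map (simplex_top k) X \<sigma>"
  from openin_continuous_map_preimage[OF this assms]
  show "openin (simplex_top k) {x \<in> standard_simplex k. \<sigma> x \<in> U}"
    by simp
qed

lemma topspace_dgen [simp]: "topspace (dgen X) = topspace X"
proof
  show "topspace (dgen X) \<subseteq> topspace X"
    by (metis openin_dgen dgen_open_def openin_topspace)
  show "topspace X \<subseteq> topspace (dgen X)"
    using openin_imp_openin_dgen[OF openin_topspace[of X]] openin_subset by blast
qed

lemma continuous_map_dgen_id: "continuous_map (dgen X) X (\<lambda>x. x)"
  unfolding continuous_map_def
proof (intro conjI allI impI)
  fix U
  assume "openin X U"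
  moreover have "{x \<in> topspace (dgen X). x \<in> U} = U"
    using openin_subset[OF \<open>openin X U\<close>] by auto
  ultimately show "openin (dgen X) {x \<in> topspace (dgen X). x \<in> U}"
    by (simp add: openin_imp_openin_dgen)
qed auto

lemma continuous_map_simplex_top_into_dgen:
  assumes "continuous_map (simplex_top k) X \<sigma>"
  shows "continuous_map (simplex_top k) (dgen X) \<sigma>"
  unfolding continuous_map_def
proof (intro conjI allI impI)
  show "\<sigma> \<in> topspace (simplex_top k) \<rightarrow> topspace (dgen X)"
    using assms by (simp add: continuous_map_def)
  fix U
  assume "openin (dgen X) U"
  then show "openin (simplex_top k) {x \<in> topspace (simplex_top k). \<sigma> x \<in> U}"
    using assms by (simp add: openin_dgen dgen_open_def)
qed

lemma continuous_map_from_dgen: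
  assumes "g \<in> topspace X \<rightarrow> topspace Y"
    and "\<And>k \<sigma>. continuous_map (simplex_top k) X \<sigma> \<Longrightarrow> continuous_map (simplex_top k) Y (g \<circ> \<sigma>)"
  shows "continuous_map (dgen X) Y g"
  unfolding continuous_map_def
proof (intro conjI allI impI)
  show "g \<in> topspace (dgen X) \<rightarrow> topspace Y"
    using assms(1) by simp
  fix U
  assume U: "openin Y U"
  show "openin (dgen X) {x \<in> topspace (dgen X). g x \<in> U}"
    unfolding openin_dgen dgen_open_def
  proof (intro conjI allI impI)
    show "{x \<in> topspace (dgen X). g x \<in> U} \<subseteq> topspace X"
      by auto
    fix k \<sigma>
    assume \<sigma>: "continuous_map (simplex_top k) X \<sigma>"
    have "{x \<in> standard_simplex k. \<sigma> x \<in> {x \<in> topspace (dgen X). g x \<in> U}}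
        = {x \<in> topspace (simplex_top k). (g \<circ> \<sigma>) x \<in> U}"
      using continuous_map_image_subset_topspace[OF \<sigma>] by auto
    then show "openin (simplex_top k) {x \<in> standard_simplex k. \<sigma> x \<in> {x \<in> topspace (dgen X). g x \<in> U}}"
      using openin_continuous_map_preimage[OF assms(2)[OF \<sigma>] U] by simp
  qed
qed

lemma continuous_map_dgen_into_dgen:
  assumes "continuous_map (dgen X) Y g"
  shows "continuous_map (dgen X) (dgen Y) g"
proof (rule continuous_map_from_dgen)
  show "g \<in> topspace X \<rightarrow> topspace (dgen Y)"
    using assms by (simp add: continuous_map_def)
  fix k \<sigma>
  assume "continuous_map (simplex_top k) X \<sigma>"
  then have "continuous_map (simplex_top k) Y (g \<circ> \<sigma>)"
    using assms continuous_map_compose continuous_map_simplex_top_into_dgen by blast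
  then show "continuous_map (simplex_top k) (dgen Y) (g \<circ> \<sigma>)"
    by (rule continuous_map_simplex_top_into_dgen)
qed

lemma continuous_map_into_dsubtopology_dgen:
  assumes "g \<in> topspace X \<rightarrow> S" and "S \<subseteq> topspace Y"
    and "\<And>k \<sigma>. continuous_map (simplex_top k) X \<sigma> \<Longrightarrow> continuous_map (simplex_top k) Y (g \<circ> \<sigma>)"
  shows "continuous_map (dgen X) (dsubtopology (dgen Y) S) g"
proof -
  have "continuous_map (dgen X) Y g"
    using assms by (intro continuous_map_from_dgen) auto
  then have "continuous_map (dgen X) (subtopology (dgen Y) S) g"
    using assms(1) by (auto simp: continuous_map_in_subtopology dest: continuous_map_dgen_into_dgen)
  then show ?thesis
    unfolding dsubtopology_def by (rule continuous_map_dgen_into_dgen)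
qed

lemma continuous_map_dsubtopology_dgenD:
  assumes "continuous_map Z (dsubtopology (dgen Y) S) f"
  shows "continuous_map Z Y f"
proof -
  from assms have "continuous_map Z (dgen (subtopology (dgen Y) S)) f"
    by (simp add: dsubtopology_def)
  then have "continuous_map Z (subtopology (dgen Y) S) f"
    using continuous_map_compose[OF _ continuous_map_dgen_id] by (simp add: o_def)
  then have "continuous_map Z (dgen Y) f"
    using continuous_map_in_subtopology by blast
  then show ?thesis
    using continuous_map_compose[OF _ continuous_map_dgen_id] by (simp add: o_def)
qed

section \<open>The compact-open topology and the exponential law\<close>

lemma topspace_compact_open:
  "topspace (compact_open A B) = {f. continuous_map A B f \<and> f \<in> extensional (topspace A)}"
  unfolding compact_open_def topology_generated_by_topspace
  by (auto intro!: exI[of _ "{}"] exI[of _ "topspace B"])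

lemma openin_compact_open_basic:
  assumes "compactin A K" and "openin B U"
  shows "openin (compact_open A B) {f. continuous_map A B f \<and> f \<in> extensional (topspace A) \<and> f ` K \<subseteq> U}"
  unfolding compact_open_def by (rule topology_generated_by_Basis) (use assms in blast)

lemma continuous_map_uncurry_compact_open:
  assumes loc_compact: "neighbourhood_base_of (compactin A) A"
    and \<rho>: "continuous_map Z (compact_open A B) \<rho>"
  shows "continuous_map (prod_topology Z A) B (\<lambda>(s, x). \<rho> s x)"
  unfolding continuous_map_def
proof (intro conjI allI impI)
  have \<rho>s: "continuous_map A B (\<rho> s)" if "s \<in> topspace Z" for s
    using continuous_map_image_subset_topspace[OF \<rho>] that by (auto simp: topspace_compact_open)
  then show "(\<lambda>(s, x). \<rho> s x) \<in> topspace (prod_topology Z A) \<rightarrow> topspace B"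
    by (fastforce dest: continuous_map_image_subset_topspace)
  fix W
  assume W: "openin B W"
  show "openin (prod_topology Z A) {p \<in> topspace (prod_topology Z A). (case p of (s, x) \<Rightarrow> \<rho> s x) \<in> W}"
  proof (subst openin_subopen, intro ballI)
    fix p
    assume "p \<in> {p \<in> topspace (prod_topology Z A). (case p of (s, x) \<Rightarrow> \<rho> s x) \<in> W}"
    then obtain s0 x0 where p: "p = (s0, x0)" and s0: "s0 \<in> topspace Z" and x0: "x0 \<in> topspace A"
      and "\<rho> s0 x0 \<in> W"
      by auto
    then have "openin A {x \<in> topspace A. \<rho> s0 x \<in> W}" "x0 \<in> {x \<in> topspace A. \<rho> s0 x \<in> W}"
      using openin_continuous_map_preimage[OF \<rho>s W] by auto
    then obtain U K where UK: "openin A U" "compactin A K" "x0 \<in> U" "U \<subseteq> K"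
        "K \<subseteq> {x \<in> topspace A. \<rho> s0 x \<in> W}"
      using loc_compact x0 unfolding neighbourhood_base_of_def neighbourhood_base_at_def by meson
    define N where "N = {f. continuous_map A B f \<and> f \<in> extensional (topspace A) \<and> f ` K \<subseteq> W}"
    have "openin Z {s \<in> topspace Z. \<rho> s \<in> N}"
      using openin_continuous_map_preimage[OF \<rho> openin_compact_open_basic[OF UK(2) W]]
      by (simp add: N_def)
    moreover have "\<rho> s0 \<in> N"
      using UK s0 continuous_map_image_subset_topspace[OF \<rho>]
      by (auto simp: N_def topspace_compact_open)
    ultimately show "\<exists>T. openin (prod_topology Z A) T \<and> p \<in> T \<and>
        T \<subseteq> {p \<in> topspace (prod_topology Z A). (case p of (s, x) \<Rightarrow> \<rho> s x) \<in> W}"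
      using UK p s0 openin_subset[OF UK(1)]
      by (intro exI[of _ "{s \<in> topspace Z. \<rho> s \<in> N} \<times> U"])
         (auto simp: openin_prod_Times_iff N_def image_subset_iff)
  qed
qed

lemma continuous_map_curry_compact_open:
  assumes G: "continuous_map (prod_topology Z A) B G"
  shows "continuous_map Z (compact_open A B) (\<lambda>s. restrict (\<lambda>x. G (s, x)) (topspace A))"
  unfolding compact_open_def
proof (rule continuous_on_generated_topo)
  have Gs: "continuous_map A B (restrict (\<lambda>x. G (s, x)) (topspace A))" if "s \<in> topspace Z" for s
  proof -
    have "continuous_map A (prod_topology Z A) (\<lambda>x. (s, x))"
      using that by (intro continuous_map_pairedI) auto
    then have "continuous_map A B (\<lambda>x. G (s, x))"
      using continuous_map_compose[OF _ G] by (simp add: o_def)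
    then show ?thesis
      by (rule continuous_map_eq) auto
  qed
  then show "(\<lambda>s. restrict (\<lambda>x. G (s, x)) (topspace A)) ` topspace Z \<subseteq> \<Union> {F. \<exists>K U. compactin A K \<and>
      openin B U \<and> F = {f. continuous_map A B f \<and> f \<in> extensional (topspace A) \<and> f ` K \<subseteq> U}}"
    using topspace_compact_open[of A B] unfolding compact_open_def topology_generated_by_topspace
    by auto
  fix T
  assume "T \<in> {F. \<exists>K U. compactin A K \<and> openin B U \<and>
      F = {f. continuous_map A B f \<and> f \<in> extensional (topspace A) \<and> f ` K \<subseteq> U}}"
  then obtain K U where K: "compactin A K" and U: "openin B U"
    and T: "T = {f. continuous_map A B f \<and> f \<in> extensional (topspace A) \<and> f ` K \<subseteq> U}"
    by blast
  have KA: "K \<subseteq> topspace A"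
    using K by (rule compactin_subset_topspace)
  have preimage_T: "(\<lambda>s. restrict (\<lambda>x. G (s, x)) (topspace A)) -` T \<inter> topspace Z
      = {s \<in> topspace Z. \<forall>x\<in>K. G (s, x) \<in> U}"
    using Gs KA unfolding T by auto
  have W: "openin (prod_topology Z A) {p \<in> topspace (prod_topology Z A). G p \<in> U}"
    using G U by (rule openin_continuous_map_preimage)
  show "openin Z ((\<lambda>s. restrict (\<lambda>x. G (s, x)) (topspace A)) -` T \<inter> topspace Z)"
    unfolding preimage_T
  proof (subst openin_subopen, intro ballI)
    fix s0
    assume s0: "s0 \<in> {s \<in> topspace Z. \<forall>x\<in>K. G (s, x) \<in> U}"
    then have "{s0} \<times> K \<subseteq> {p \<in> topspace (prod_topology Z A). G p \<in> U}"
      using KA by auto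
    from tube_lemma_right[OF W K _ this] s0
    obtain V V' where V: "openin Z V" "s0 \<in> V" and "K \<subseteq> V'"
        and VV': "V \<times> V' \<subseteq> {p \<in> topspace (prod_topology Z A). G p \<in> U}"
      by blast
    then have "V \<subseteq> {s \<in> topspace Z. \<forall>x\<in>K. G (s, x) \<in> U}"
      using openin_subset[OF V(1)] by auto
    with V show "\<exists>V. openin Z V \<and> s0 \<in> V \<and> V \<subseteq> {s \<in> topspace Z. \<forall>x\<in>K. G (s, x) \<in> U}"
      by blast
  qed
qed

section \<open>Convex combinations in the standard simplex\<close>

lemma standard_simplex_eq_Simplices: "standard_simplex = Simplices.standard_simplex"
  by (simp add: Defs.standard_simplex_def Simplices.standard_simplex_def fun_eq_iff)

lemma neighbourhood_base_of_compactin_simplex_top: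
  "neighbourhood_base_of (compactin (simplex_top n)) (simplex_top n)"
proof -
  have "compact_space (simplex_top n)"
    by (simp add: compact_space_subtopology compactin_standard_simplex standard_simplex_eq_Simplices)
  then have "locally_compact_space (simplex_top n)"
    by (rule compact_imp_locally_compact_space)
  moreover have "Hausdorff_space (simplex_top n)"
    by (simp add: Hausdorff_space_subtopology Hausdorff_space_product_topology)
  ultimately show ?thesis
    using locally_compact_space_neighbourhood_base by blast
qed

lemma continuous_map_convex_combination_simplex_top:
  assumes \<tau>: "continuous_map W (top_of_set {0..1::real}) \<tau>"
    and f: "continuous_map W (simplex_top n) f" and g: "continuous_map W (simplex_top n) g"
  shows "continuous_map W (simplex_top n) (\<lambda>w i. (1 - \<tau> w) * f w i + \<tau> w * g w i)"
proof -
  have "continuous_map W euclideanreal \<tau>"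
    using \<tau> continuous_map_in_subtopology by blast
  moreover have "continuous_map W euclideanreal (\<lambda>w. f w i)" "continuous_map W euclideanreal (\<lambda>w. g w i)" for i
    using f g by (auto simp: continuous_map_in_subtopology continuous_map_componentwise_UNIV)
  ultimately have "continuous_map W (powertop_real UNIV) (\<lambda>w i. (1 - \<tau> w) * f w i + \<tau> w * g w i)"
    by (auto simp: continuous_map_componentwise_UNIV intro!: continuous_map_add continuous_map_real_mult
        continuous_map_diff)
  moreover have "(\<lambda>w i. (1 - \<tau> w) * f w i + \<tau> w * g w i) \<in> topspace W \<rightarrow> standard_simplex n"
    using continuous_map_image_subset_topspace[OF \<tau>] continuous_map_image_subset_topspace[OF f]
      continuous_map_image_subset_topspace[OF g]
    by (auto simp: standard_simplex_eq_Simplices intro!: convex_standard_simplex)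
  ultimately show ?thesis
    by (simp add: continuous_map_in_subtopology)
qed

lemma Max_support_standard_simplex:
  assumes "x \<in> standard_simplex n"
  shows "Max {i. x i \<noteq> 0} \<le> n" and "x (Max {i. x i \<noteq> 0}) \<noteq> 0"
    and "x i \<noteq> 0 \<Longrightarrow> i \<le> Max {i. x i \<noteq> 0}"
proof -
  have support: "{i. x i \<noteq> 0} \<subseteq> {..n}"
    using assms by (auto simp: standard_simplex_def) (meson not_le)
  then have finite: "finite {i. x i \<noteq> 0}"
    using finite_subset by blast
  have "{i. x i \<noteq> 0} \<noteq> {}"
  proof
    assume "{i. x i \<noteq> 0} = {}"
    then have "(\<Sum>i\<le>n. x i) = 0"
      by auto
    with assms show False
      by (simp add: standard_simplex_def)
  qed
  then show "Max {i. x i \<noteq> 0} \<le> n" and "x (Max {i. x i \<noteq> 0}) \<noteq> 0"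
    using Max_in[OF finite] support by auto
  show "x i \<noteq> 0 \<Longrightarrow> i \<le> Max {i. x i \<noteq> 0}"
    using Max_ge[OF finite] by simp
qed

lemma Max_support_convex_combination:
  assumes x: "x \<in> standard_simplex n" and y: "y \<in> standard_simplex n"
    and same_Max: "Max {i. y i \<noteq> 0} = Max {i. x i \<noteq> 0}" and t: "0 \<le> t" "t \<le> 1"
  shows "Max {i. (1 - t) * y i + t * x i \<noteq> 0} = Max {i. x i \<noteq> 0}"
proof (rule Max_eqI)
  let ?m = "Max {i. x i \<noteq> 0}"
  have nonneg: "0 \<le> x i" "0 \<le> y i" for i
    using x y by (auto simp: standard_simplex_def)
  have le_m: "i \<le> ?m" if "x i \<noteq> 0 \<or> y i \<noteq> 0" for i
    using that Max_support_standard_simplex(3)[OF x] Max_support_standard_simplex(3)[OF y] same_Max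
    by auto
  have support: "{i. (1 - t) * y i + t * x i \<noteq> 0} \<subseteq> {..?m}"
  proof
    fix i
    assume "i \<in> {i. (1 - t) * y i + t * x i \<noteq> 0}"
    then have "x i \<noteq> 0 \<or> y i \<noteq> 0"
      by auto
    then show "i \<in> {..?m}"
      using le_m by simp
  qed
  then show "finite {i. (1 - t) * y i + t * x i \<noteq> 0}"
    using finite_subset by blast
  show "i \<le> ?m" if "i \<in> {i. (1 - t) * y i + t * x i \<noteq> 0}" for i
    using that support by auto
  have "x ?m \<noteq> 0" "y ?m \<noteq> 0"
    using Max_support_standard_simplex(2)[OF x] Max_support_standard_simplex(2)[OF y] same_Max
    by auto
  moreover have "0 \<le> (1 - t) * y ?m" "0 \<le> t * x ?m"
    using t nonneg by auto
  ultimately show "?m \<in> {i. (1 - t) * y i + t * x i \<noteq> 0}"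
    by (cases "t = 0") (auto simp: add_nonneg_eq_0_iff)
qed

lemma simplex_to_poset_convex_combination:
  fixes \<phi> :: "nat \<Rightarrow> 'p::order"
  assumes \<phi>: "strict_mono_on {..n} \<phi>"
    and x: "x \<in> standard_simplex n" and y: "y \<in> standard_simplex n"
    and same_vertex: "simplex_to_poset \<phi> y = simplex_to_poset \<phi> x" and t: "0 \<le> t" "t \<le> 1"
  shows "simplex_to_poset \<phi> (\<lambda>i. (1 - t) * y i + t * x i) = simplex_to_poset \<phi> x"
proof -
  have "Max {i. y i \<noteq> 0} = Max {i. x i \<noteq> 0}"
    using strict_mono_on_imp_inj_on[OF \<phi>] same_vertex
      Max_support_standard_simplex(1)[OF x] Max_support_standard_simplex(1)[OF y]
    by (auto simp: simplex_to_poset_def inj_on_def)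
  then show ?thesis
    using Max_support_convex_combination[OF x y _ t] by (simp add: simplex_to_poset_def)
qed

section \<open>The straight-line homotopy to the identity\<close>

definition linear_homotopy_to_id ::
    "nat \<Rightarrow> real \<times> ((nat \<Rightarrow> real) \<Rightarrow> nat \<Rightarrow> real) \<Rightarrow> (nat \<Rightarrow> real) \<Rightarrow> nat \<Rightarrow> real" where
  "linear_homotopy_to_id n =
     (\<lambda>(t, f). restrict (\<lambda>x i. (1 - t) * f x i + t * x i) (standard_simplex n))"

lemma topspace_dsubtopology_filtered_self_maps:
  "topspace (dsubtopology (mapping_space (simplex_top n) (simplex_top n)) (filtered_self_maps n \<phi>))
     = filtered_self_maps n \<phi>"
  by (auto simp: dsubtopology_def mapping_space_def filtered_self_maps_def topspace_compact_open)

lemma linear_homotopy_to_id_in_filtered_self_maps: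
  assumes \<phi>: "nondeg_simplex n \<phi>" and t: "t \<in> {0..1}" and f: "f \<in> filtered_self_maps n \<phi>"
  shows "linear_homotopy_to_id n (t, f) \<in> filtered_self_maps n \<phi>"
proof -
  have f_cont: "continuous_map (simplex_top n) (simplex_top n) f"
    using f by (simp add: filtered_self_maps_def)
  have "continuous_map (simplex_top n) (simplex_top n) (\<lambda>x i. (1 - t) * f x i + t * x i)"
    using continuous_map_convex_combination_simplex_top[OF _ f_cont continuous_map_id] t by simp
  then have "continuous_map (simplex_top n) (simplex_top n) (linear_homotopy_to_id n (t, f))"
    by (rule continuous_map_eq) (simp add: linear_homotopy_to_id_def)
  moreover have "simplex_to_poset \<phi> (\<lambda>i. (1 - t) * f x i + t * x i) = simplex_to_poset \<phi> x"
    if "x \<in> standard_simplex n" for x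
    using simplex_to_poset_convex_combination[OF \<phi>[unfolded nondeg_simplex_def] that] that t f
      continuous_map_image_subset_topspace[OF f_cont]
    by (auto simp: filtered_self_maps_def)
  ultimately show ?thesis
    by (simp add: filtered_self_maps_def linear_homotopy_to_id_def)
qed

lemma continuous_map_linear_homotopy_to_id:
  assumes \<tau>: "continuous_map Z (top_of_set {0..1::real}) \<tau>"
    and \<rho>: "continuous_map Z (compact_open (simplex_top n) (simplex_top n)) \<rho>"
  shows "continuous_map Z (compact_open (simplex_top n) (simplex_top n))
           (\<lambda>s. linear_homotopy_to_id n (\<tau> s, \<rho> s))"
proof -
  have "continuous_map (prod_topology Z (simplex_top n)) (simplex_top n) (\<lambda>(s, x). \<rho> s x)"
    using neighbourhood_base_of_compactin_simplex_top \<rho> by (rule continuous_map_uncurry_compact_open)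
  from continuous_map_convex_combination_simplex_top[OF continuous_map_compose[OF continuous_map_fst \<tau>]
      this continuous_map_snd]
  have "continuous_map (prod_topology Z (simplex_top n)) (simplex_top n)
      (\<lambda>(s, x) i. (1 - \<tau> s) * \<rho> s x i + \<tau> s * x i)"
    by (simp add: case_prod_beta')
  from continuous_map_curry_compact_open[OF this] show ?thesis
    by (simp add: linear_homotopy_to_id_def)
qed

lemma continuous_map_linear_homotopy_to_id_dgen:
  assumes "nondeg_simplex n \<phi>"
  defines "X \<equiv> dsubtopology (mapping_space (simplex_top n) (simplex_top n)) (filtered_self_maps n \<phi>)"
  shows "continuous_map (dgen (prod_topology (top_of_set {0..1::real}) X)) X (linear_homotopy_to_id n)"
proof -
  let ?CO = "compact_open (simplex_top n) (simplex_top n)"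
  have X: "X = dsubtopology (dgen ?CO) (filtered_self_maps n \<phi>)"
    by (simp add: X_def mapping_space_def)
  have filtered_CO: "filtered_self_maps n \<phi> \<subseteq> topspace ?CO"
    by (auto simp: filtered_self_maps_def topspace_compact_open)
  have topspace_X: "topspace X = filtered_self_maps n \<phi>"
    unfolding X_def by (rule topspace_dsubtopology_filtered_self_maps)
  have "continuous_map (dgen (prod_topology (top_of_set {0..1::real}) X))
      (dsubtopology (dgen ?CO) (filtered_self_maps n \<phi>)) (linear_homotopy_to_id n)"
  proof (rule continuous_map_into_dsubtopology_dgen[OF _ filtered_CO])
    show "linear_homotopy_to_id n \<in> topspace (prod_topology (top_of_set {0..1::real}) X) \<rightarrow> filtered_self_maps n \<phi>"
      using linear_homotopy_to_id_in_filtered_self_maps[OF assms(1)] by (auto simp: topspace_X)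
    fix k \<sigma>
    assume "continuous_map (simplex_top k) (prod_topology (top_of_set {0..1::real}) X) \<sigma>"
    then have "continuous_map (simplex_top k) (top_of_set {0..1::real}) (fst \<circ> \<sigma>)"
      and "continuous_map (simplex_top k) ?CO (snd \<circ> \<sigma>)"
      by (auto simp: continuous_map_pairwise X dest: continuous_map_dsubtopology_dgenD)
    from continuous_map_linear_homotopy_to_id[OF this]
    show "continuous_map (simplex_top k) ?CO (linear_homotopy_to_id n \<circ> \<sigma>)"
      by (simp add: o_def)
  qed
  then show ?thesis
    by (simp add: X)
qed

theorem lemma2p18:
  fixes \<phi> :: "nat \<Rightarrow> 'p::order" and n :: nat
  assumes "nondeg_simplex n \<phi>"
  shows "dcontractible
           (dsubtopology (mapping_space (simplex_top n) (simplex_top n)) (filtered_self_maps n \<phi>))"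
proof -
  define id_simplex where "id_simplex = restrict (\<lambda>x. x) (standard_simplex n)"
  have "id_simplex \<in> filtered_self_maps n \<phi>"
    by (auto simp: id_simplex_def filtered_self_maps_def intro: continuous_map_eq[OF continuous_map_id])
  moreover have "linear_homotopy_to_id n (0, f) = f" if "f \<in> filtered_self_maps n \<phi>" for f
    using that by (auto simp: linear_homotopy_to_id_def filtered_self_maps_def extensional_def)
  moreover have "linear_homotopy_to_id n (1, f) = id_simplex" for f
    by (simp add: linear_homotopy_to_id_def id_simplex_def)
  ultimately show ?thesis
    unfolding dcontractible_def topspace_dsubtopology_filtered_self_maps
    using continuous_map_linear_homotopy_to_id_dgen[OF assms] by blast
qed

end
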